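(* Consider the hierarchical Gaussian $K$-armed bandit and the algorithm HierTS described in the context. Fix any round $t$, and let $\psi_t = (\psi_t(1), \dots, \psi_t(L_t))$ be the list of nodes on the path from the root $\psi_t(1) = 1$ to the action node $\psi_t(L_t) = A_t$. Then the marginal posterior variance of $\theta_{*, A_t}$ satisfies \[ \mathrm{Var}(\theta_{*, A_t} \mid H_t) = \sum_{i=1}^{L_t} \bigg(\prod_{j=i+1}^{L_t} \frac{\hat{\sigma}_{t, \psi_t(j)}^4}{\sigma_{0, \psi_t(j)}^4}\bigg) \hat{\sigma}_{t, \psi_t(i)}^2\,. \]
   Context: Tree and model. Let $\mathcal{T}$ be a rooted tree with node set $\mathcal{V}$, root labeled $1$, in which every internal node has at least $2$ children. For a node $i \neq 1$, $\mathsf{pa}(i)$ is its parent; $\mathsf{ch}(i)$ is the set of children of $i$. The leaves form the action set $\mathcal{A}$, $|\mathcal{A}| = K$. Node parameters $\theta_{*, i} \in \mathbb{R}$ are generated as $\theta_{*, 1} \sim \mathcal{N}(\mu_1, \sigma_{0,1}^2)$ and, for $i \neq 1$, $\theta_{*, i} \mid \theta_{*, \mathsf{pa}(i)} \sim \mathcal{N}(\theta_{*, \mathsf{pa}(i)}, \sigma_{0,i}^2)$, with known $\mu_1$ and $\sigma_{0,i} > 0$. In each round $t$ the agent takes $A_t \in \mathcal{A}$ and observes $Y_t \sim \mathcal{N}(\theta_{*, A_t}, \sigma^2)$ (independent noise, known $\sigma > 0$). The history is $H_t = (A_\ell, Y_\ell)_{\ell < t}$. HierTS samples $\Theta_t$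 exactly from the posterior of $(\theta_{*,i})_{i \in \mathcal{V}}$ given $H_t$ and takes $A_t = \arg\max_{a \in \mathcal{A}} \theta_{t,a}$. Conditional posterior variances. For a node $i \neq 1$, $\hat{\sigma}_{t,i}^2$ is the variance of $\theta_{*, i}$ conditioned on $H_t$ and on $\theta_{*, \mathsf{pa}(i)}$ (it does not depend on the value of the parent); for the root, $\hat{\sigma}_{t,1}^2 = \mathrm{Var}(\theta_{*,1} \mid H_t)$. Explicitly, with $\mathcal{S}_{t,a} = \{\ell < t : A_\ell = a\}$: for an action node $a$, $\hat{\sigma}_{t,a}^{-2} = \sigma_{0,a}^{-2} + |\mathcal{S}_{t,a}| \sigma^{-2}$; for a non-action node $i$, $\hat{\sigma}_{t,i}^{-2} = \sigma_{0,i}^{-2} + \sum_{j \in \mathsf{ch}(i)} \tilde{\sigma}_{t,j}^{-2}$, where recursively $\tilde{\sigma}_{t,j}^{2} = \sigma_{0,j}^2 + \sigma^2/|\mathcal{S}_{t,j}|$ for an action node $j$ (with $\tilde{\sigma}_{t,j}^{-2} = 0$ if $|\mathcal{S}_{t,j}| = 0$) and $\tilde{\sigma}_{t,j}^{2} = \sigma_{0,j}^2 + \big(\sum_{k \in \mathsf{ch}(j)} \tilde{\sigma}_{t,k}^{-2}\big)^{-1}$ for a non-action node $j$. *)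

theory Defs
  imports "HOL-Analysis.Analysis"
begin

text \<open>Hierarchical Gaussian bandit on a tree whose nodes form the finite type 'n.
  The tree is given by a root r and a parent map pa (pa r is irrelevant).\<close>

definition children :: "'n \<Rightarrow> ('n \<Rightarrow> 'n) \<Rightarrow> 'n \<Rightarrow> 'n set" where
  "children r pa i = {j. j \<noteq> r \<and> pa j = i}"

definition is_leaf :: "'n \<Rightarrow> ('n \<Rightarrow> 'n) \<Rightarrow> 'n \<Rightarrow> bool" where
  "is_leaf r pa i \<longleftrightarrow> children r pa i = {}"

definition is_tree :: "'n \<Rightarrow> ('n \<Rightarrow> 'n) \<Rightarrow> bool" where
  "is_tree r pa \<longleftrightarrow> pa r = r \<and> (\<forall>i. \<exists>m. (pa ^^ m) i = r)
     \<and> (\<forall>i. \<not> is_leaf r pa i \<longrightarrow> card (children r pa i) \<ge> 2)"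

definition ancestors :: "('n \<Rightarrow> 'n) \<Rightarrow> 'n \<Rightarrow> 'n set" where
  "ancestors pa i = {k. \<exists>m. (pa ^^ m) i = k}"

definition pulls :: "('n \<times> real) list \<Rightarrow> 'n \<Rightarrow> nat" where
  "pulls H a = length (filter (\<lambda>l. fst l = a) H)"

definition prior_cov :: "('n \<Rightarrow> 'n) \<Rightarrow> ('n::finite \<Rightarrow> real) \<Rightarrow> real^'n^'n" where
  "prior_cov pa s0 = (\<chi> i j. \<Sum>k\<in>ancestors pa i \<inter> ancestors pa j. (s0 k)^2)"

definition post_cov :: "('n \<Rightarrow> 'n) \<Rightarrow> ('n::finite \<Rightarrow> real) \<Rightarrow> real \<Rightarrow> ('n \<times> real) list \<Rightarrow> real^'n^'n" where
  "post_cov pa s0 s H = matrix_inv (matrix_inv (prior_cov pa s0)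
       + (\<chi> i j. if i = j then real (pulls H i) / s^2 else 0))"

definition post_var :: "('n \<Rightarrow> 'n) \<Rightarrow> ('n::finite \<Rightarrow> real) \<Rightarrow> real \<Rightarrow> ('n \<times> real) list \<Rightarrow> 'n \<Rightarrow> real" where
  "post_var pa s0 s H a = post_cov pa s0 s H $ a $ a"

text \<open>tilde-sigma^{-2}, computed with fuel (depth of the tree is < CARD('n)).
  Convention: (tilde sigma_j)^{-2} = 0 when no observations lie below j.\<close>
fun tprec_fuel :: "nat \<Rightarrow> 'n \<Rightarrow> ('n \<Rightarrow> 'n) \<Rightarrow> ('n \<Rightarrow> real) \<Rightarrow> real \<Rightarrow> ('n \<times> real) list \<Rightarrow> 'n \<Rightarrow> real" where
  "tprec_fuel m r pa s0 s H j =
     (if is_leaf r pa j then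
        (if pulls H j = 0 then 0 else 1 / ((s0 j)^2 + s^2 / real (pulls H j)))
      else (case m of 0 \<Rightarrow> 0
        | Suc m' \<Rightarrow> (let q = (\<Sum>k\<in>children r pa j. tprec_fuel m' r pa s0 s H k)
                    in if q = 0 then 0 else 1 / ((s0 j)^2 + 1 / q))))"

definition tprec :: "'n::finite \<Rightarrow> ('n \<Rightarrow> 'n) \<Rightarrow> ('n \<Rightarrow> real) \<Rightarrow> real \<Rightarrow> ('n \<times> real) list \<Rightarrow> 'n \<Rightarrow> real" where
  "tprec r pa s0 s H j = tprec_fuel CARD('n) r pa s0 s H j"

definition hat_var :: "'n::finite \<Rightarrow> ('n \<Rightarrow> 'n) \<Rightarrow> ('n \<Rightarrow> real) \<Rightarrow> real \<Rightarrow> ('n \<times> real) list \<Rightarrow> 'n \<Rightarrow> real" where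
  "hat_var r pa s0 s H i = 1 /
     (if is_leaf r pa i then 1 / (s0 i)^2 + real (pulls H i) / s^2
      else 1 / (s0 i)^2 + (\<Sum>j\<in>children r pa i. tprec r pa s0 s H j))"

end

theory Submission
  imports Defs
begin

(* Writing theta = V eps, where V is the ancestor-indicator matrix and eps the independent
   increments theta_i - theta_(pa i) ~ N(0, sigma_(0,i)^2), the prior precision is B^T
   diag(sigma_0^-2) B with B = V^-1 the increment matrix, and the posterior precision Lambda adds
   diag(|S_(t,i)| / sigma^2). Rather than inverting Lambda, we exhibit its column x with Lambda x =
   e_a and read off Var(theta_a | H) = x_a. The candidate is x_v = Cov(theta_v, theta_a | H). Off
   the path it is c_v x_(pa v), where c_v = hat_sigma_v^2 / sigma_(0,v)^2 is the coefficient of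
   theta_(pa v) in E[theta_v | theta_(pa v), H]. Indexing the path from psi(0) = 1 to psi(L-1) = a,
   at psi(k) it is c_psi(k+1) ... c_psi(L-1) times v_k = Var(theta_psi(k) | H), where v_k =
   hat_sigma_psi(k)^2 + c_psi(k)^2 v_(k-1). Unrolling v_(L-1) gives the claimed sum; checking Lambda
   x = e_a row by row only uses the recursions defining tilde_sigma and hat_sigma. *)

section \<open>Inverse and diagonal matrices\<close>

lemma matrix_inv_eqI:
  fixes A B :: "'a::field^'n^'n"
  assumes "A ** B = mat 1"
  shows "matrix_inv A = B"
proof -
  have "\<exists>A'. A ** A' = mat 1 \<and> A' ** A = mat 1"
    using assms matrix_left_right_inverse by blast
  then have inv: "A ** matrix_inv A = mat 1 \<and> matrix_inv A ** A = mat 1"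
    unfolding matrix_inv_def by (rule someI_ex)
  have "matrix_inv A = matrix_inv A ** (A ** B)"
    using assms by simp
  also have "\<dots> = B"
    using inv by (simp add: matrix_mul_assoc)
  finally show ?thesis .
qed

lemma matrix_inv_column_eq:
  fixes A :: "real^'n^'n"
  assumes "\<And>y. A *v y = 0 \<Longrightarrow> y = 0" and "A *v x = axis a 1"
  shows "matrix_inv A $ i $ a = x $ i"
proof -
  obtain B where "B ** A = mat 1"
    using assms(1) matrix_left_invertible_ker by blast
  then have "matrix_inv A = B" and "B ** A = mat 1"
    using matrix_left_right_inverse matrix_inv_eqI by blast+
  then have "matrix_inv A *v axis a 1 = x"
    using assms(2) by (metis matrix_vector_mul_assoc matrix_vector_mul_lid)
  then show ?thesis
    by (simp add: matrix_vector_mult_basis column_def vec_eq_iff)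
qed

definition diag_mat :: "('n \<Rightarrow> 'a::zero) \<Rightarrow> 'a^'n^'n" where
  "diag_mat d = (\<chi> i j. if i = j then d i else 0)"

lemma diag_mat_mult_vec: "(diag_mat d *v x) $ i = d i * x $ i"
  by (simp add: diag_mat_def matrix_vector_mult_def if_distrib[of "\<lambda>z. z * _"] cong: if_cong)

lemma diag_mat_mult_diag_mat: "diag_mat d ** diag_mat e = diag_mat (\<lambda>i. d i * e i)"
  by (simp add: diag_mat_def matrix_matrix_mult_def vec_eq_iff if_distrib[of "\<lambda>z. z * _"] cong: if_cong)

lemma mult_diag_mat: "(M ** diag_mat d) $ i $ k = M $ i $ k * d k"
  by (simp add: diag_mat_def matrix_matrix_mult_def if_distrib[of "\<lambda>z. _ * z"] cong: if_cong)

lemma diag_mat_one: "diag_mat (\<lambda>_. 1) = mat 1"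
  by (simp add: diag_mat_def mat_def)

lemma congruent_diag_plus_diag_injective:
  fixes B C :: "real^'n^'n"
  assumes "C ** B = mat 1" and "\<And>i. d i > 0" and "\<And>i. e i \<ge> 0"
    and "(transpose B ** diag_mat d ** B + diag_mat e) *v y = 0"
  shows "y = 0"
proof -
  let ?z = "B *v y"
  have transpose_adj: "inner y (w v* B) = inner ?z w" for w
    by (metis dot_lmul_matrix inner_commute)
  have "0 = inner y ((transpose B ** diag_mat d ** B + diag_mat e) *v y)"
    using assms(4) by simp
  also have "\<dots> = inner ?z (diag_mat d *v ?z) + inner y (diag_mat e *v y)"
    by (simp add: matrix_vector_mult_add_rdistrib inner_add_right transpose_adj
        flip: matrix_vector_mul_assoc)
  also have "\<dots> = (\<Sum>i\<in>UNIV. d i * (?z $ i)\<^sup>2) + (\<Sum>i\<in>UNIV. e i * (y $ i)\<^sup>2)"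
    by (simp add: inner_vec_def diag_mat_mult_vec power2_eq_square mult_ac)
  finally have sum_eq_0: "0 = (\<Sum>i\<in>UNIV. d i * (?z $ i)\<^sup>2) + (\<Sum>i\<in>UNIV. e i * (y $ i)\<^sup>2)" .
  have "0 \<le> (\<Sum>i\<in>UNIV. d i * (?z $ i)\<^sup>2)" and "0 \<le> (\<Sum>i\<in>UNIV. e i * (y $ i)\<^sup>2)"
    using assms(2,3) by (intro sum_nonneg mult_nonneg_nonneg; simp add: less_imp_le)+
  with sum_eq_0 have "(\<Sum>i\<in>UNIV. d i * (?z $ i)\<^sup>2) = 0"
    by linarith
  then have "?z = 0"
    using assms(2) by (simp add: sum_nonneg_eq_0_iff less_imp_le vec_eq_iff) (metis less_irrefl)
  then have "(C ** B) *v y = 0"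
    by (simp flip: matrix_vector_mul_assoc)
  then show "y = 0"
    using assms(1) by simp
qed

section \<open>Rooted trees\<close>

lemma ancestors_self: "i \<in> ancestors pa i"
  unfolding ancestors_def by (auto intro: exI[of _ 0])

lemma ancestors_pa: "ancestors pa i = insert i (ancestors pa (pa i))"
proof -
  have "(\<exists>m. (pa ^^ m) i = k) \<longleftrightarrow> k = i \<or> (\<exists>m. (pa ^^ m) (pa i) = k)" for k
  proof
    assume "\<exists>m. (pa ^^ m) i = k"
    then obtain m where "(pa ^^ m) i = k" by blast
    then show "k = i \<or> (\<exists>m. (pa ^^ m) (pa i) = k)"
      by (cases m) (simp, metis funpow_Suc_right comp_apply)
  next
    assume "k = i \<or> (\<exists>m. (pa ^^ m) (pa i) = k)"
    then show "\<exists>m. (pa ^^ m) i = k"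
      by (metis funpow_0 funpow_Suc_right comp_apply)
  qed
  then show ?thesis
    unfolding ancestors_def by blast
qed

lemma ancestors_trans:
  assumes "k \<in> ancestors pa j" and "j \<in> ancestors pa i"
  shows "k \<in> ancestors pa i"
proof -
  obtain m n where "(pa ^^ m) j = k" and "(pa ^^ n) i = j"
    using assms unfolding ancestors_def by blast
  then have "(pa ^^ (m + n)) i = k"
    by (simp only: funpow_add comp_apply)
  then show ?thesis
    unfolding ancestors_def by blast
qed

locale rooted_tree =
  fixes r :: 'n and pa :: "'n \<Rightarrow> 'n"
  assumes pa_root: "pa r = r"
    and reaches_root: "\<exists>m. (pa ^^ m) i = r"
begin

lemma funpow_pa_root: "(pa ^^ m) r = r"
  by (induction m) (simp_all add: pa_root)

lemma ancestors_root: "ancestors pa r = {r}"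
  unfolding ancestors_def using funpow_pa_root by auto

lemma not_in_ancestors_pa:
  assumes "i \<noteq> r"
  shows "i \<notin> ancestors pa (pa i)"
proof
  assume "i \<in> ancestors pa (pa i)"
  then obtain p where "(pa ^^ p) (pa i) = i"
    unfolding ancestors_def by blast
  then have cycle: "(pa ^^ Suc p) i = i"
    by (simp only: funpow_Suc_right comp_apply)
  have cycle_iter: "(pa ^^ (n * Suc p)) i = i" for n
  proof (induction n)
    case (Suc n)
    have "Suc n * Suc p = Suc p + n * Suc p" by simp
    then show ?case
      by (simp only: funpow_add comp_apply Suc.IH cycle)
  qed simp
  obtain m where m: "(pa ^^ m) i = r"
    using reaches_root by blast
  have "m * Suc p = m * p + m"
    by simp
  then have "(pa ^^ (m * Suc p)) i = r"
    by (simp only: funpow_add comp_apply m funpow_pa_root)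
  then show False
    using cycle_iter[of m] assms by simp
qed

definition descendants :: "'n \<Rightarrow> 'n set" where
  "descendants j = {k. j \<in> ancestors pa k}"

lemma self_in_descendants: "j \<in> descendants j"
  unfolding descendants_def by (simp add: ancestors_self)

lemma descendants_child_subset:
  assumes "k \<in> children r pa j"
  shows "descendants k \<subseteq> descendants j - {j}"
proof
  fix l
  assume l: "l \<in> descendants k"
  have "k \<noteq> r" and pa_k: "pa k = j"
    using assms unfolding children_def by auto
  then have "k \<notin> ancestors pa j"
    using not_in_ancestors_pa by blast
  moreover have "j \<in> ancestors pa k"
    using ancestors_pa[where i = k] ancestors_self[where i = j] pa_k by simp
  moreover have "k \<in> ancestors pa l"
    using l unfolding descendants_def by simp
  ultimately have "j \<in> ancestors pa l" and "l \<noteq> j"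
    using ancestors_trans by auto
  then show "l \<in> descendants j - {j}"
    unfolding descendants_def by simp
qed

definition depth :: "'n \<Rightarrow> nat" where
  "depth v = (LEAST m. (pa ^^ m) v = r)"

lemma depth_root: "depth r = 0"
  unfolding depth_def by simp

lemma depth_pa:
  assumes "v \<noteq> r"
  shows "depth v = Suc (depth (pa v))"
proof -
  have reach_v: "(pa ^^ depth v) v = r" and reach_pa: "(pa ^^ depth (pa v)) (pa v) = r"
    unfolding depth_def by (rule LeastI_ex, rule reaches_root)+
  then obtain d where d: "depth v = Suc d"
    using assms by (cases "depth v") auto
  then have "(pa ^^ d) (pa v) = r"
    using reach_v by (simp only: funpow_Suc_right comp_apply)
  then have "depth (pa v) \<le> d"
    unfolding depth_def by (rule Least_le)
  moreover have "(pa ^^ Suc (depth (pa v))) v = r"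
    using reach_pa by (simp only: funpow_Suc_right comp_apply)
  then have "depth v \<le> Suc (depth (pa v))"
    unfolding depth_def by (rule Least_le)
  ultimately show ?thesis
    using d by simp
qed

lemma ex_parent_recursion:
  fixes g c :: "'n \<Rightarrow> 'a::times"
  assumes "P r"
  shows "\<exists>X. \<forall>v. X v = (if P v then g v else c v * X (pa v))"
proof -
  define F where "F = rec_nat g (\<lambda>_ F v. if P v then g v else c v * F (pa v))"
  have F_0: "F 0 = g" and F_Suc: "F (Suc n) v = (if P v then g v else c v * F n (pa v))" for n v
    by (simp_all add: F_def)
  have "F (depth v) v = (if P v then g v else c v * F (depth (pa v)) (pa v))" for v
  proof (cases "v = r")
    case True
    then show ?thesis
      using assms by (simp add: F_0 depth_root)
  next
    case False
    then show ?thesis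
      by (simp only: depth_pa[OF False] F_Suc)
  qed
  then show ?thesis
    by (intro exI[of _ "\<lambda>v. F (depth v) v"]) blast
qed

end

section \<open>Prior and posterior precision of the tree model\<close>

definition post_prec ::
    "('n \<Rightarrow> 'n) \<Rightarrow> ('n::finite \<Rightarrow> real) \<Rightarrow> real \<Rightarrow> ('n \<times> real) list \<Rightarrow> real^'n^'n" where
  "post_prec pa s0 s H = matrix_inv (prior_cov pa s0) + diag_mat (\<lambda>i. real (pulls H i) / s^2)"

lemma post_cov_eq: "post_cov pa s0 s H = matrix_inv (post_prec pa s0 s H)"
  by (simp add: post_cov_def post_prec_def diag_mat_def)

locale finite_rooted_tree = rooted_tree r pa for r :: "'n::finite" and pa
begin

definition increment_mat :: "real^'n^'n" where
  "increment_mat = (\<chi> i j. (if j = i then 1 else 0) - (if i \<noteq> r \<and> j = pa i then 1 else 0))"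

definition ancestor_mat :: "real^'n^'n" where
  "ancestor_mat = (\<chi> i k. if k \<in> ancestors pa i then 1 else 0)"

lemma increment_mat_mult_vec: "(increment_mat *v y) $ i = y $ i - (if i = r then 0 else y $ pa i)"
proof -
  have "(increment_mat *v y) $ i
      = (\<Sum>j\<in>UNIV. ((if j = i then 1 else 0) - (if i \<noteq> r \<and> j = pa i then 1 else 0)) * y $ j)"
    unfolding increment_mat_def matrix_vector_mult_def by simp
  also have "\<dots> = (\<Sum>j\<in>UNIV. if j = i then y $ j else 0)
      - (\<Sum>j\<in>UNIV. if i \<noteq> r \<and> j = pa i then y $ j else 0)"
    unfolding sum_subtractf[symmetric] by (intro sum.cong) auto
  finally show ?thesis
    by (cases "i = r") simp_all
qed

lemma transpose_increment_mat_mult_vec: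
  "(transpose increment_mat *v z) $ v = z $ v - (\<Sum>i\<in>children r pa v. z $ i)"
proof -
  have "(transpose increment_mat *v z) $ v
      = (\<Sum>i\<in>UNIV. ((if v = i then 1 else 0) - (if i \<noteq> r \<and> v = pa i then 1 else 0)) * z $ i)"
    unfolding increment_mat_def transpose_def matrix_vector_mult_def by simp
  also have "\<dots> = (\<Sum>i\<in>UNIV. if i = v then z $ i else 0)
      - (\<Sum>i\<in>UNIV. if i \<in> children r pa v then z $ i else 0)"
    unfolding sum_subtractf[symmetric] by (intro sum.cong) (auto simp: children_def)
  finally show ?thesis
    by (simp add: sum.If_cases)
qed

lemma increment_mat_ancestor_mat: "increment_mat ** ancestor_mat = mat 1"
proof -
  have "(increment_mat *v column k ancestor_mat) $ i = mat 1 $ i $ k" for i k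
  proof (cases "i = r")
    case True
    then show ?thesis
      by (simp add: increment_mat_mult_vec column_def ancestor_mat_def ancestors_root mat_def)
  next
    case False
    then show ?thesis
      using not_in_ancestors_pa[OF False] ancestors_pa[where i = i]
      by (auto simp add: increment_mat_mult_vec column_def ancestor_mat_def mat_def)
  qed
  then show ?thesis
    by (simp add: vec_eq_iff matrix_matrix_mult_def matrix_vector_mult_def column_def)
qed

lemma prior_cov_eq: "prior_cov pa s0 = ancestor_mat ** diag_mat (\<lambda>k. (s0 k)^2) ** transpose ancestor_mat"
proof -
  have "(ancestor_mat ** diag_mat (\<lambda>k. (s0 k)^2) ** transpose ancestor_mat) $ i $ j
      = (\<Sum>k\<in>UNIV. if k \<in> ancestors pa i \<inter> ancestors pa j then (s0 k)^2 else 0)" for i j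
  proof -
    have "(ancestor_mat ** diag_mat (\<lambda>k. (s0 k)^2) ** transpose ancestor_mat) $ i $ j
        = (\<Sum>k\<in>UNIV. (ancestor_mat ** diag_mat (\<lambda>k. (s0 k)^2)) $ i $ k * transpose ancestor_mat $ k $ j)"
      by (simp add: matrix_matrix_mult_def[of "ancestor_mat ** _"])
    then show ?thesis
      by (auto simp add: mult_diag_mat transpose_def ancestor_mat_def intro!: sum.cong)
  qed
  then show ?thesis
    by (simp add: prior_cov_def vec_eq_iff sum.If_cases Int_def)
qed

lemma inverse_prior_cov:
  assumes "\<And>i. s0 i \<noteq> 0"
  shows "matrix_inv (prior_cov pa s0) = transpose increment_mat ** diag_mat (\<lambda>i. 1 / (s0 i)^2) ** increment_mat"
proof (rule matrix_inv_eqI)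
  have "transpose ancestor_mat ** transpose increment_mat = mat 1"
    using increment_mat_ancestor_mat by (metis matrix_transpose_mul transpose_mat)
  moreover have "diag_mat (\<lambda>k. (s0 k)^2) ** diag_mat (\<lambda>i. 1 / (s0 i)^2) = mat 1"
    using assms by (simp add: diag_mat_mult_diag_mat diag_mat_one)
  moreover have "ancestor_mat ** increment_mat = mat 1"
    using increment_mat_ancestor_mat matrix_left_right_inverse by blast
  ultimately have "ancestor_mat ** (diag_mat (\<lambda>k. (s0 k)^2) ** (transpose ancestor_mat ** transpose increment_mat)
      ** diag_mat (\<lambda>i. 1 / (s0 i)^2)) ** increment_mat = mat 1"
    by simp
  then show "prior_cov pa s0 ** (transpose increment_mat ** diag_mat (\<lambda>i. 1 / (s0 i)^2) ** increment_mat) = mat 1"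
    by (simp add: prior_cov_eq matrix_mul_assoc)
qed

lemma post_prec_mult_vec:
  assumes "\<And>i. s0 i \<noteq> 0"
  shows "(post_prec pa s0 s H *v X) $ v
    = (X $ v - (if v = r then 0 else X $ pa v)) / (s0 v)^2
      - (\<Sum>i\<in>children r pa v. (X $ i - X $ v) / (s0 i)^2) + real (pulls H v) / s^2 * X $ v"
proof -
  have "(\<Sum>i\<in>children r pa v. (X $ i - (if i = r then 0 else X $ pa i)) / (s0 i)^2)
      = (\<Sum>i\<in>children r pa v. (X $ i - X $ v) / (s0 i)^2)"
    by (intro sum.cong) (auto simp: children_def)
  then show ?thesis
    unfolding post_prec_def inverse_prior_cov[OF assms]
    by (simp add: matrix_vector_mult_add_rdistrib transpose_increment_mat_mult_vec diag_mat_mult_vec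
        increment_mat_mult_vec flip: matrix_vector_mul_assoc del: transpose_matrix_vector)
qed

lemma post_prec_injective:
  assumes "\<And>i. s0 i > 0" and "post_prec pa s0 s H *v y = 0"
  shows "y = 0"
proof -
  have s0_nonzero: "s0 i \<noteq> 0" for i
    using assms(1)[of i] by simp
  show ?thesis
  proof (rule congruent_diag_plus_diag_injective)
    show "ancestor_mat ** increment_mat = mat 1"
      using increment_mat_ancestor_mat matrix_left_right_inverse by blast
    show "(transpose increment_mat ** diag_mat (\<lambda>i. 1 / (s0 i)^2) ** increment_mat
        + diag_mat (\<lambda>i. real (pulls H i) / s^2)) *v y = 0"
      using assms(2) by (simp add: post_prec_def inverse_prior_cov s0_nonzero)
  qed (simp_all add: s0_nonzero)
qed

end

section \<open>Recursive precisions\<close>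

declare tprec_fuel.simps [simp del]

lemma tprec_fuel_nonneg: "0 \<le> tprec_fuel m r pa s0 s H j"
proof (induction m arbitrary: j)
  case 0
  show ?case
    by (subst tprec_fuel.simps) simp
next
  case (Suc m)
  then have "0 \<le> (\<Sum>k\<in>children r pa j. tprec_fuel m r pa s0 s H k)"
    by (intro sum_nonneg) auto
  then show ?case
    by (subst tprec_fuel.simps) (simp add: Let_def)
qed

lemma tprec_nonneg: "0 \<le> tprec r pa s0 s H j"
  unfolding tprec_def by (rule tprec_fuel_nonneg)

context finite_rooted_tree
begin

lemma card_descendants_child_less:
  assumes "k \<in> children r pa j"
  shows "card (descendants k) < card (descendants j)"
  using descendants_child_subset[OF assms] self_in_descendants[of j] by (intro psubset_card_mono) auto

lemma tprec_fuel_Suc: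
  assumes "card (descendants j) \<le> Suc m"
  shows "tprec_fuel (Suc m) r pa s0 s H j = tprec_fuel m r pa s0 s H j"
  using assms
proof (induction m arbitrary: j)
  case 0
  have "children r pa j = {}"
  proof (rule ccontr)
    assume "children r pa j \<noteq> {}"
    then obtain k where "k \<in> children r pa j"
      by blast
    then have "card (descendants k) < card (descendants j)"
      by (rule card_descendants_child_less)
    moreover have "card (descendants k) > 0"
      using self_in_descendants[of k] by (auto simp: card_gt_0_iff)
    ultimately show False
      using "0" by simp
  qed
  then show ?case
    by (subst (1 2) tprec_fuel.simps) (simp add: is_leaf_def)
next
  case (Suc m)
  have "tprec_fuel (Suc m) r pa s0 s H k = tprec_fuel m r pa s0 s H k" if "k \<in> children r pa j" for k
    using Suc.IH card_descendants_child_less[OF that] Suc.prems by simp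
  then have "(\<Sum>k\<in>children r pa j. tprec_fuel (Suc m) r pa s0 s H k)
      = (\<Sum>k\<in>children r pa j. tprec_fuel m r pa s0 s H k)"
    by (rule sum.cong[OF refl])
  then show ?case
    by (subst (1 2) tprec_fuel.simps) (simp only: nat.case)
qed

lemma tprec_fuel_Suc_card: "tprec_fuel (Suc CARD('n)) r pa s0 s H j = tprec r pa s0 s H j"
  unfolding tprec_def by (rule tprec_fuel_Suc) (simp add: card_mono le_SucI)

end

locale hierarchical_bandit = finite_rooted_tree r pa for r :: "'n::finite" and pa +
  fixes s0 :: "'n \<Rightarrow> real" and s :: real and H :: "('n \<times> real) list"
  assumes s0_pos: "s0 i > 0"
    and s_pos: "s > 0"
    and history_at_leaves: "l \<in> set H \<Longrightarrow> is_leaf r pa (fst l)"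
begin

definition obs_prec :: "'n \<Rightarrow> real" where
  "obs_prec j = (if is_leaf r pa j then real (pulls H j) / s^2
     else (\<Sum>k\<in>children r pa j. tprec r pa s0 s H k))"

definition cond_coeff :: "'n \<Rightarrow> real" where
  "cond_coeff j = hat_var r pa s0 s H j / (s0 j)^2"

lemma obs_prec_nonneg: "0 \<le> obs_prec j"
  unfolding obs_prec_def by (simp add: sum_nonneg tprec_nonneg)

lemma obs_prec_eq_sum: "obs_prec j = (\<Sum>k\<in>children r pa j. tprec r pa s0 s H k) + real (pulls H j) / s^2"
proof (cases "is_leaf r pa j")
  case False
  then have "pulls H j = 0"
    using history_at_leaves unfolding pulls_def by (auto simp: filter_empty_conv)
  then show ?thesis
    using False by (simp add: obs_prec_def)
qed (simp add: obs_prec_def is_leaf_def)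

lemma hat_var_eq: "hat_var r pa s0 s H j = 1 / (1 / (s0 j)^2 + obs_prec j)"
  by (simp add: hat_var_def obs_prec_def)

lemma hat_var_pos: "hat_var r pa s0 s H j > 0"
  using s0_pos[of j] obs_prec_nonneg[of j] by (simp add: hat_var_eq add_pos_nonneg)

lemma cond_coeff_eq: "cond_coeff j = 1 / (1 + (s0 j)^2 * obs_prec j)"
proof -
  have "(s0 j)^2 > 0"
    using s0_pos[of j] by simp
  then have "1 / (s0 j)^2 + obs_prec j = (1 + (s0 j)^2 * obs_prec j) / (s0 j)^2"
    by (simp add: field_simps)
  then show ?thesis
    using s0_pos[of j] by (simp add: cond_coeff_def hat_var_eq)
qed

lemma tprec_eq_obs_prec: "tprec r pa s0 s H j = obs_prec j / (1 + (s0 j)^2 * obs_prec j)"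
proof -
  have s0_nonzero: "s0 j \<noteq> 0"
    using s0_pos[of j] by simp
  have unfold: "tprec r pa s0 s H j =
    (if is_leaf r pa j then (if pulls H j = 0 then 0 else 1 / ((s0 j)^2 + s^2 / real (pulls H j)))
     else (let q = (\<Sum>k\<in>children r pa j. tprec r pa s0 s H k) in if q = 0 then 0 else 1 / ((s0 j)^2 + 1 / q)))"
    by (subst tprec_fuel_Suc_card[symmetric], subst tprec_fuel.simps) (simp add: tprec_def)
  show ?thesis
  proof (cases "is_leaf r pa j")
    case True
    then show ?thesis
      using s_pos s0_nonzero by (simp add: unfold obs_prec_def field_simps)
  next
    case False
    then have "obs_prec j = (\<Sum>k\<in>children r pa j. tprec r pa s0 s H k)"
      by (simp add: obs_prec_def)
    then show ?thesis
      using False obs_prec_nonneg[of j] s0_nonzero by (simp add: unfold Let_def field_simps)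
  qed
qed

lemma tprec_eq_mult_cond_coeff: "tprec r pa s0 s H j = obs_prec j * cond_coeff j"
  by (simp add: tprec_eq_obs_prec cond_coeff_eq)

lemma tprec_eq_cond_coeff: "tprec r pa s0 s H j = (1 - cond_coeff j) / (s0 j)^2"
proof -
  have "1 + (s0 j)^2 * obs_prec j > 0"
    using obs_prec_nonneg[of j] by (simp add: add_pos_nonneg)
  then have "1 - cond_coeff j = (s0 j)^2 * obs_prec j / (1 + (s0 j)^2 * obs_prec j)"
    by (simp add: cond_coeff_eq field_simps)
  then show ?thesis
    using s0_pos[of j] by (simp add: tprec_eq_obs_prec)
qed

(* Every child i with X_i = cond_coeff i * X_v contributes -tprec i * X_v to row v, so only the
   children in C remain explicit. *)
lemma post_prec_row_split:
  assumes "C \<subseteq> children r pa v"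
    and regular: "\<And>i. i \<in> children r pa v - C \<Longrightarrow> X $ i = cond_coeff i * X $ v"
  shows "(post_prec pa s0 s H *v X) $ v
    = (X $ v - (if v = r then 0 else X $ pa v)) / (s0 v)^2 + obs_prec v * X $ v
      - (\<Sum>i\<in>C. tprec r pa s0 s H i * X $ v + (X $ i - X $ v) / (s0 i)^2)"
proof -
  have fin: "finite (children r pa v)"
    by simp
  have "(X $ i - X $ v) / (s0 i)^2 = - tprec r pa s0 s H i * X $ v" if "i \<in> children r pa v - C" for i
    using regular[OF that] s0_pos[of i] by (simp add: tprec_eq_cond_coeff field_simps)
  then have "(\<Sum>i\<in>children r pa v - C. (X $ i - X $ v) / (s0 i)^2)
      = - (\<Sum>i\<in>children r pa v - C. tprec r pa s0 s H i) * X $ v"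
    by (simp add: sum_distrib_right sum_negf)
  also have "\<dots> = - ((\<Sum>i\<in>children r pa v. tprec r pa s0 s H i) - (\<Sum>i\<in>C. tprec r pa s0 s H i)) * X $ v"
    using assms(1) fin by (simp add: sum_diff)
  finally have "(\<Sum>i\<in>children r pa v. (X $ i - X $ v) / (s0 i)^2)
      = - (obs_prec v - real (pulls H v) / s^2 - (\<Sum>i\<in>C. tprec r pa s0 s H i)) * X $ v
        + (\<Sum>i\<in>C. (X $ i - X $ v) / (s0 i)^2)"
    using sum.subset_diff[OF assms(1) fin, where g = "\<lambda>i. (X $ i - X $ v) / (s0 i)^2"]
    by (simp add: obs_prec_eq_sum)
  then show ?thesis
    using s0_pos by (simp add: post_prec_mult_vec less_imp_neq[symmetric] sum.distrib sum_distrib_left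
        algebra_simps)
qed

lemma post_prec_row_eq_0:
  assumes "v \<noteq> r"
    and parent: "X $ v = cond_coeff v * X $ pa v"
    and child: "\<And>i. i \<in> children r pa v \<Longrightarrow> X $ i = cond_coeff i * X $ v"
  shows "(post_prec pa s0 s H *v X) $ v = 0"
proof -
  have "(post_prec pa s0 s H *v X) $ v = (X $ v - X $ pa v) / (s0 v)^2 + obs_prec v * X $ v"
    using post_prec_row_split[of "{}"] child assms(1) by simp
  also have "\<dots> = (- tprec r pa s0 s H v + obs_prec v * cond_coeff v) * X $ pa v"
    using s0_pos[of v] parent by (simp add: tprec_eq_cond_coeff field_simps)
  also have "\<dots> = 0"
    by (simp add: tprec_eq_mult_cond_coeff)
  finally show ?thesis .
qed

end

section \<open>The posterior covariance with the chosen leaf\<close>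

locale root_path = rooted_tree r pa for r :: 'n and pa +
  fixes \<psi> :: "'n list"
  assumes path_nonempty: "\<psi> \<noteq> []"
    and path_hd: "hd \<psi> = r"
    and path_distinct: "distinct \<psi>"
    and path_pa: "Suc k < length \<psi> \<Longrightarrow> pa (\<psi> ! Suc k) = \<psi> ! k"
begin

lemma nth_path_0: "\<psi> ! 0 = r"
  using path_nonempty path_hd by (simp add: hd_conv_nth)

lemma root_in_path: "r \<in> set \<psi>"
  using nth_path_0 path_nonempty by (metis length_greater_0_conv nth_mem)

lemma nth_path_eq_root_iff:
  assumes "k < length \<psi>"
  shows "\<psi> ! k = r \<longleftrightarrow> k = 0"
  using nth_eq_iff_index_eq[OF path_distinct assms, of 0] nth_path_0 assms path_nonempty by auto

lemma nth_path_Suc_in_children: "Suc k < length \<psi> \<Longrightarrow> \<psi> ! Suc k \<in> children r pa (\<psi> ! k)"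
  using nth_path_eq_root_iff[of "Suc k"] path_pa unfolding children_def by auto

lemma child_in_path:
  assumes "i \<in> children r pa v" and "j < length \<psi>" and "i = \<psi> ! j"
  obtains k where "j = Suc k" and "v = \<psi> ! k"
proof -
  have "i \<noteq> r" and "pa i = v"
    using assms(1) unfolding children_def by auto
  then obtain k where "j = Suc k"
    using assms(2,3) nth_path_0 by (cases j) auto
  then show thesis
    using that path_pa assms(2,3) \<open>pa i = v\<close> by simp
qed

lemma children_off_path: "i \<in> children r pa v \<Longrightarrow> v \<notin> set \<psi> \<Longrightarrow> i \<notin> set \<psi>"
  by (metis child_in_path in_set_conv_nth Suc_lessD)

lemma children_on_path:
  assumes "k < length \<psi>" and "i \<in> children r pa (\<psi> ! k)" and "i \<in> set \<psi>"
  shows "Suc k < length \<psi> \<and> i = \<psi> ! Suc k"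
proof -
  obtain j where j: "j < length \<psi>" "i = \<psi> ! j"
    using assms(3) by (metis in_set_conv_nth)
  then obtain k' where "j = Suc k'" and "\<psi> ! k = \<psi> ! k'"
    using child_in_path[OF assms(2)] by metis
  then show ?thesis
    using j assms(1) path_distinct by (simp add: nth_eq_iff_index_eq)
qed

end

locale leaf_path = hierarchical_bandit r pa s0 s H + root_path r pa \<psi>
  for r :: "'n::finite" and pa s0 s H \<psi> +
  fixes a :: 'n
  assumes a_leaf: "is_leaf r pa a"
    and path_last: "last \<psi> = a"
begin

lemma nth_path_last: "\<psi> ! (length \<psi> - 1) = a"
  using path_nonempty path_last by (simp add: last_conv_nth)

lemma nth_path_eq_leaf_iff:
  assumes "k < length \<psi>"
  shows "\<psi> ! k = a \<longleftrightarrow> \<not> Suc k < length \<psi>"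
  using nth_eq_iff_index_eq[OF path_distinct assms, of "length \<psi> - 1"] nth_path_last assms path_nonempty
  by auto

(* In the notation of the header: path_var k = v_k, leaf_coeff k = c_psi(k+1) ... c_psi(L-1), and
   path_cov k = Cov(theta_psi(k), theta_a | H). *)
definition path_var :: "nat \<Rightarrow> real" where
  "path_var k = (\<Sum>i<Suc k. (\<Prod>j\<in>{Suc i..<Suc k}. (cond_coeff (\<psi> ! j))^2) * hat_var r pa s0 s H (\<psi> ! i))"

definition leaf_coeff :: "nat \<Rightarrow> real" where
  "leaf_coeff k = (\<Prod>j\<in>{Suc k..<length \<psi>}. cond_coeff (\<psi> ! j))"

definition path_cov :: "nat \<Rightarrow> real" where
  "path_cov k = leaf_coeff k * path_var k"

lemma path_var_rec:
  "path_var k = hat_var r pa s0 s H (\<psi> ! k) + (cond_coeff (\<psi> ! k))^2 * (if k = 0 then 0 else path_var (k - 1))"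
proof (cases k)
  case (Suc k')
  have "(\<Sum>i<k. (\<Prod>j\<in>{Suc i..<Suc k}. (cond_coeff (\<psi> ! j))^2) * hat_var r pa s0 s H (\<psi> ! i))
      = (\<Sum>i<k. (cond_coeff (\<psi> ! k))^2
          * ((\<Prod>j\<in>{Suc i..<k}. (cond_coeff (\<psi> ! j))^2) * hat_var r pa s0 s H (\<psi> ! i)))"
    by (intro sum.cong) (simp_all add: prod.atLeastLessThan_Suc)
  also have "\<dots> = (cond_coeff (\<psi> ! k))^2 * path_var k'"
    by (simp only: sum_distrib_left path_var_def Suc)
  finally have below: "(\<Sum>i<k. (\<Prod>j\<in>{Suc i..<Suc k}. (cond_coeff (\<psi> ! j))^2) * hat_var r pa s0 s H (\<psi> ! i))
      = (cond_coeff (\<psi> ! k))^2 * path_var k'" .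
  have "path_var k = (\<Sum>i<k. (\<Prod>j\<in>{Suc i..<Suc k}. (cond_coeff (\<psi> ! j))^2) * hat_var r pa s0 s H (\<psi> ! i))
      + hat_var r pa s0 s H (\<psi> ! k)"
    by (simp only: path_var_def[of k] sum.lessThan_Suc) simp
  then show ?thesis
    unfolding below using Suc by simp
qed (simp add: path_var_def)

lemma leaf_coeff_Suc: "Suc k < length \<psi> \<Longrightarrow> leaf_coeff k = cond_coeff (\<psi> ! Suc k) * leaf_coeff (Suc k)"
  unfolding leaf_coeff_def by (simp add: prod.atLeast_Suc_lessThan)

lemma path_row_parent:
  assumes "k < length \<psi>"
  shows "(path_cov k - (if k = 0 then 0 else path_cov (k - 1))) / (s0 (\<psi> ! k))^2
      + obs_prec (\<psi> ! k) * path_cov k = leaf_coeff k"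
proof -
  let ?h = "hat_var r pa s0 s H (\<psi> ! k)" and ?q = "(s0 (\<psi> ! k))^2"
    and ?p = "leaf_coeff k" and ?w = "if k = 0 then 0 else path_var (k - 1)"
  have alg: "(p * (h + (h / q)^2 * w) - h / q * p * w) / q + (1 / h - 1 / q) * (p * (h + (h / q)^2 * w)) = p"
    if "h \<noteq> 0" and "q \<noteq> 0" for p h q w :: real
    using that by (simp add: field_simps power2_eq_square)
  have h_nonzero: "?h \<noteq> 0" and q_nonzero: "?q \<noteq> 0"
    using hat_var_pos[of "\<psi> ! k"] s0_pos[of "\<psi> ! k"] by simp_all
  have "(if k = 0 then 0 else path_cov (k - 1)) = ?h / ?q * ?p * ?w"
    using leaf_coeff_Suc[of "k - 1"] assms by (cases k) (simp_all add: path_cov_def cond_coeff_def)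
  moreover have "obs_prec (\<psi> ! k) = 1 / ?h - 1 / ?q"
    by (simp add: hat_var_eq)
  ultimately show ?thesis
    using alg[OF h_nonzero q_nonzero, of ?p ?w]
    by (simp only: path_cov_def[of k] path_var_rec[of k] cond_coeff_def)
qed

lemma path_row_child:
  assumes "Suc k < length \<psi>"
  shows "tprec r pa s0 s H (\<psi> ! Suc k) * path_cov k + (path_cov (Suc k) - path_cov k) / (s0 (\<psi> ! Suc k))^2
      = leaf_coeff k"
proof -
  let ?c = "cond_coeff (\<psi> ! Suc k)" and ?q = "(s0 (\<psi> ! Suc k))^2"
    and ?h = "hat_var r pa s0 s H (\<psi> ! Suc k)" and ?p = "leaf_coeff (Suc k)" and ?w = "path_var k"
  have alg: "(1 - c) / q * (c * p * w) + (p * (h + c^2 * w) - c * p * w) / q = p * h / q" for c p w h q :: real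
    by (cases "q = 0") (simp_all add: field_simps power2_eq_square)
  have "tprec r pa s0 s H (\<psi> ! Suc k) * path_cov k + (path_cov (Suc k) - path_cov k) / ?q
      = (1 - ?c) / ?q * (?c * ?p * ?w) + (?p * (?h + ?c^2 * ?w) - ?c * ?p * ?w) / ?q"
    by (simp only: tprec_eq_cond_coeff path_cov_def leaf_coeff_Suc[OF assms] path_var_rec[of "Suc k"]
        diff_Suc_1 nat.distinct if_False)
  also have "\<dots> = ?p * ?h / ?q"
    by (rule alg)
  also have "\<dots> = leaf_coeff k"
    by (simp add: leaf_coeff_Suc[OF assms] cond_coeff_def)
  finally show ?thesis .
qed

context
  fixes X :: "real^'n"
  assumes X_on_path: "\<And>k. k < length \<psi> \<Longrightarrow> X $ (\<psi> ! k) = path_cov k"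
    and X_off_path: "\<And>v. v \<notin> set \<psi> \<Longrightarrow> X $ v = cond_coeff v * X $ pa v"
begin

lemma post_prec_row_on_path:
  assumes k: "k < length \<psi>"
  shows "(post_prec pa s0 s H *v X) $ (\<psi> ! k) = (if Suc k < length \<psi> then 0 else 1)"
proof -
  let ?v = "\<psi> ! k"
  have parent: "(if ?v = r then 0 else X $ pa ?v) = (if k = 0 then 0 else path_cov (k - 1))"
    using nth_path_eq_root_iff[OF k] path_pa[of "k - 1"] X_on_path[of "k - 1"] k by (cases k) auto
  show ?thesis
  proof (cases "Suc k < length \<psi>")
    case True
    let ?w = "\<psi> ! Suc k"
    have "X $ i = cond_coeff i * X $ ?v" if "i \<in> children r pa ?v - {?w}" for i
    proof -
      have "i \<notin> set \<psi>" and "pa i = ?v"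
        using children_on_path[OF k] that unfolding children_def by auto
      then show ?thesis
        using X_off_path by simp
    qed
    then have "(post_prec pa s0 s H *v X) $ ?v
        = ((path_cov k - (if k = 0 then 0 else path_cov (k - 1))) / (s0 ?v)^2 + obs_prec ?v * path_cov k)
          - (tprec r pa s0 s H ?w * path_cov k + (path_cov (Suc k) - path_cov k) / (s0 ?w)^2)"
      using post_prec_row_split[of "{?w}"] nth_path_Suc_in_children[OF True] parent
        X_on_path[OF k] X_on_path[OF True] by simp
    then show ?thesis
      using path_row_parent[OF k] path_row_child[OF True] True by simp
  next
    case False
    then have "children r pa ?v = {}"
      using nth_path_eq_leaf_iff[OF k] a_leaf unfolding is_leaf_def by simp
    then have "(post_prec pa s0 s H *v X) $ ?v
        = (X $ ?v - (if ?v = r then 0 else X $ pa ?v)) / (s0 ?v)^2 + obs_prec ?v * X $ ?v"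
      using post_prec_row_split[of "{}" ?v X] by simp
    also have "\<dots> = (path_cov k - (if k = 0 then 0 else path_cov (k - 1))) / (s0 ?v)^2 + obs_prec ?v * path_cov k"
      unfolding parent X_on_path[OF k] ..
    finally show ?thesis
      using path_row_parent[OF k] False k by (simp add: leaf_coeff_def)
  qed
qed

lemma post_prec_column: "post_prec pa s0 s H *v X = axis a 1"
proof -
  have "(post_prec pa s0 s H *v X) $ v = axis a 1 $ v" for v
  proof (cases "v \<in> set \<psi>")
    case True
    then obtain k where "k < length \<psi>" and "v = \<psi> ! k"
      by (metis in_set_conv_nth)
    then show ?thesis
      using post_prec_row_on_path nth_path_eq_leaf_iff by (simp add: axis_def)
  next
    case False
    then have "v \<noteq> a"
      using nth_path_last path_nonempty by (metis diff_less length_greater_0_conv nth_mem zero_less_one)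
    moreover have "(post_prec pa s0 s H *v X) $ v = 0"
    proof (rule post_prec_row_eq_0)
      show "v \<noteq> r"
        using False root_in_path by blast
      show "X $ v = cond_coeff v * X $ pa v"
        using X_off_path[OF False] .
      show "X $ i = cond_coeff i * X $ v" if "i \<in> children r pa v" for i
        using X_off_path[OF children_off_path[OF that False]] that unfolding children_def by simp
    qed
    ultimately show ?thesis
      by (simp add: axis_def)
  qed
  then show ?thesis
    by (simp add: vec_eq_iff)
qed

end

lemma ex_post_prec_column:
  obtains X where "post_prec pa s0 s H *v X = axis a 1" and "X $ a = path_var (length \<psi> - 1)"
proof -
  obtain f where f: "\<And>v. f v = (if v \<in> set \<psi> then path_cov (THE k. k < length \<psi> \<and> \<psi> ! k = v)
      else cond_coeff v * f (pa v))"
    using ex_parent_recursion[where P = "\<lambda>v. v \<in> set \<psi>" and c = cond_coeff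
        and g = "\<lambda>v. path_cov (THE k. k < length \<psi> \<and> \<psi> ! k = v)"] root_in_path by blast
  define X where "X = (\<chi> v. f v)"
  have on_path: "X $ (\<psi> ! k) = path_cov k" if "k < length \<psi>" for k
  proof -
    have "(THE j. j < length \<psi> \<and> \<psi> ! j = \<psi> ! k) = k"
      using that path_distinct by (auto simp: nth_eq_iff_index_eq)
    then show ?thesis
      using that f[of "\<psi> ! k"] by (simp add: X_def)
  qed
  have off_path: "X $ v = cond_coeff v * X $ pa v" if "v \<notin> set \<psi>" for v
    using that f[of v] by (simp add: X_def)
  have "X $ a = path_cov (length \<psi> - 1)"
    using on_path[of "length \<psi> - 1"] nth_path_last path_nonempty by simp
  then show thesis
    using that post_prec_column[OF on_path off_path] path_nonempty
    by (simp add: path_cov_def leaf_coeff_def)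
qed

lemma post_var_eq_path_var: "post_var pa s0 s H a = path_var (length \<psi> - 1)"
proof -
  obtain X where X: "post_prec pa s0 s H *v X = axis a 1" and X_a: "X $ a = path_var (length \<psi> - 1)"
    by (rule ex_post_prec_column)
  have "post_var pa s0 s H a = X $ a"
    unfolding post_var_def post_cov_eq using post_prec_injective[OF s0_pos] X by (rule matrix_inv_column_eq)
  then show ?thesis
    using X_a by simp
qed

end

theorem lemma2:
  fixes r :: "'n::finite" and pa :: "'n \<Rightarrow> 'n" and s0 :: "'n \<Rightarrow> real" and s :: real
    and H :: "('n \<times> real) list" and a :: 'n and \<psi> :: "'n list"
  assumes tree: "is_tree r pa"
    and s0_pos: "\<forall>i. s0 i > 0"
    and s_pos: "s > 0"
    and hist: "\<forall>l\<in>set H. is_leaf r pa (fst l)"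
    and a_leaf: "is_leaf r pa a"
    and path_ne: "\<psi> \<noteq> []"
    and path_hd: "hd \<psi> = r"
    and path_last: "last \<psi> = a"
    and path_dist: "distinct \<psi>"
    and path_pa: "\<forall>k. Suc k < length \<psi> \<longrightarrow> pa (\<psi> ! Suc k) = \<psi> ! k"
  shows "post_var pa s0 s H a =
    (\<Sum>i<length \<psi>. (\<Prod>j\<in>{Suc i..<length \<psi>}.
        (hat_var r pa s0 s H (\<psi> ! j))^2 / (s0 (\<psi> ! j))^4) * hat_var r pa s0 s H (\<psi> ! i))"
proof -
  interpret leaf_path r pa s0 s H \<psi> a
    using assms by unfold_locales (auto simp: is_tree_def)
  have "post_var pa s0 s H a = path_var (length \<psi> - 1)"
    by (rule post_var_eq_path_var)
  also have "\<dots> = (\<Sum>i<length \<psi>. (\<Prod>j\<in>{Suc i..<length \<psi>}.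
        (hat_var r pa s0 s H (\<psi> ! j))^2 / (s0 (\<psi> ! j))^4) * hat_var r pa s0 s H (\<psi> ! i))"
    using path_ne by (simp add: path_var_def cond_coeff_def power_divide flip: power_mult)
  finally show ?thesis .
qed

end
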